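(* Let $k\ge 2$ and $G=\Theta(2,2,2k)$ with end vertices $u$ and $v$. Let $L$ be a $3$-assignment for $G$ such that $L(u)\ne L(v)$. Then $P(G,L)\ge P(G,3)$.
   Context: $\Theta(l_1,l_2,l_3)$ denotes two end vertices joined by three internally disjoint paths of lengths $l_1,l_2,l_3$. A $3$-assignment $L$ assigns to each vertex $w$ a set $L(w)$ of $3$ colors; $P(G,L)$ is the number of proper colorings $f$ of $G$ with $f(w)\in L(w)$ for all $w$. $P(G,3)$ is the number of proper colorings of $G$ with colors from $\{1,2,3\}$. *)

theory Defs
  imports Main "HOL-Library.FuncSet"
begin

text \<open>Vertices of the theta graph Theta(l1,l2,l3): the two end vertices TU, TV and
  the internal vertices TI i j (j-th internal vertex of the i-th path, i in {1,2,3},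
  0 < j < l_i).\<close>
datatype tvert = TU | TV | TI nat nat

definition plen :: "nat \<Rightarrow> nat \<Rightarrow> nat \<Rightarrow> nat \<Rightarrow> nat" where
  "plen l1 l2 l3 i = (if i = 1 then l1 else if i = 2 then l2 else l3)"

definition tnode :: "nat \<Rightarrow> nat \<Rightarrow> nat \<Rightarrow> nat \<Rightarrow> nat \<Rightarrow> tvert" where
  "tnode l1 l2 l3 i j = (if j = 0 then TU else if j = plen l1 l2 l3 i then TV else TI i j)"

definition theta_verts :: "nat \<Rightarrow> nat \<Rightarrow> nat \<Rightarrow> tvert set" where
  "theta_verts l1 l2 l3 = {TU, TV} \<union>
     {TI i j | i j. i \<in> {1,2,3} \<and> 0 < j \<and> j < plen l1 l2 l3 i}"

text \<open>Edges (as ordered pairs; the graph is undirected).\<close>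
definition theta_edges :: "nat \<Rightarrow> nat \<Rightarrow> nat \<Rightarrow> (tvert \<times> tvert) set" where
  "theta_edges l1 l2 l3 = {(tnode l1 l2 l3 i j, tnode l1 l2 l3 i (j+1)) | i j.
       i \<in> {1,2,3} \<and> j < plen l1 l2 l3 i}"

definition num_list_col :: "'v set \<Rightarrow> ('v \<times> 'v) set \<Rightarrow> ('v \<Rightarrow> nat set) \<Rightarrow> nat" where
  "num_list_col Vs E L = card {f \<in> Pi\<^sub>E Vs L. \<forall>(x, y) \<in> E. f x \<noteq> f y}"

definition num_col :: "'v set \<Rightarrow> ('v \<times> 'v) set \<Rightarrow> nat \<Rightarrow> nat" where
  "num_col Vs E m = num_list_col Vs E (\<lambda>_. {1..m})"

end

theory Submission
  imports Defs
begin

text \<open>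
  Fix the colours \<alpha> of u and \<beta> of v. The middle vertices x, y of the two paths of length 2
  then have |L(x) - {\<alpha>, \<beta>}| and |L(y) - {\<alpha>, \<beta>}| choices, and the interior of the long path
  has at least path_min (2k) choices: for lists of size 3 this lower bound propagates along the
  path, and it is attained by 3-colourings with distinct end colours (equal end colours give one
  more). Hence P(G,3) = 18 path_min (2k) + 12. On the other hand a double count shows that the
  sum over \<alpha>, \<beta> of |L(x) - {\<alpha>, \<beta>}| |L(y) - {\<alpha>, \<beta>}| is at least 21 when L(u) \<noteq> L(v), so
  P(G,L) \<ge> 21 path_min (2k), and path_min (2k) \<ge> 5 for k \<ge> 2.
\<close>

lemma card_PiE_insert_filter:
  assumes "x \<notin> V" "finite V" "\<forall>v\<in>insert x V. finite (L v)"
  shows "card {f \<in> PiE (insert x V) L. P f} = (\<Sum>c\<in>L x. card {g \<in> PiE V L. P (g(x := c))})"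
proof -
  let ?upd = "\<lambda>(c, g). g(x := c)"
  let ?S = "SIGMA c:L x. {g \<in> PiE V L. P (g(x := c))}"
  have "{f \<in> PiE (insert x V) L. P f} = ?upd ` ?S"
    unfolding PiE_insert_eq by auto
  moreover have "inj_on ?upd ?S"
    by (rule inj_on_subset[OF inj_combinator[OF assms(1)]]) auto
  moreover have "finite (PiE V L)"
    using assms by (simp add: finite_PiE)
  ultimately show ?thesis
    using assms(3) by (simp add: card_image)
qed

lemma sum_sum_if_both_notin:
  fixes c :: nat
  assumes "finite X" "finite Y"
  shows "(\<Sum>x\<in>X. \<Sum>y\<in>Y. if x \<notin> S \<and> y \<notin> S then c else 0) = card (X - S) * card (Y - S) * c"
proof -
  have "(\<Sum>x\<in>X. \<Sum>y\<in>Y. if x \<notin> S \<and> y \<notin> S then c else 0)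
      = (\<Sum>x\<in>X. if x \<notin> S then (\<Sum>y\<in>Y. if y \<notin> S then c else 0) else 0)"
    by (intro sum.cong) auto
  also have "\<dots> = (\<Sum>x\<in>X - S. \<Sum>y\<in>Y - S. c)"
    using assms by (simp add: sum.inter_filter[symmetric] set_diff_eq)
  finally show ?thesis by simp
qed

lemma two_le_card_Diff_singleton:
  assumes "card A = 3" shows "2 \<le> card (A - {c})"
  using diff_card_le_card_Diff[of "{c}" A] assms by simp

lemma one_le_card_Diff_pair: "card X = 3 \<Longrightarrow> 1 \<le> card (X - {a, b})"
  using diff_card_le_card_Diff[of "{a, b}" X] card_insert_le_m1[of 2 "{b}" a] by simp

lemma add_le_mult_plus_1:
  fixes p q :: nat
  assumes "1 \<le> p" "1 \<le> q"
  shows "p + q \<le> p * q + 1"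
proof -
  obtain p' q' where "p = p' + 1" "q = q' + 1"
    using assms by (metis le_add_diff_inverse2)
  then show ?thesis by (simp add: algebra_simps)
qed

lemma add_le_mult:
  fixes p q :: nat
  assumes "2 \<le> p" "2 \<le> q"
  shows "p + q \<le> p * q"
proof -
  obtain p' q' where "p = p' + 2" "q = q' + 2"
    using assms by (metis le_add_diff_inverse2)
  then show ?thesis by (simp add: algebra_simps)
qed

lemma sum_Diff_singleton_ge_pair_bound:
  fixes Q :: "'c \<Rightarrow> nat"
  assumes "card A = 3" and pair: "\<And>c1 c2. c1 \<noteq> c2 \<Longrightarrow> b \<le> Q c1 + Q c2"
  shows "b \<le> sum Q (A - {c})"
proof -
  have fin: "finite A" using assms(1) by (intro card_ge_0_finite) simp
  obtain x y where xy: "x \<in> A - {c}" "y \<in> A - {c}" "x \<noteq> y"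
    using two_le_card_Diff_singleton[OF assms(1), of c]
    by (metis card_2_iff' card_le_Suc0_iff_eq numeral_2_eq_2 not_less_eq_eq finite_Diff fin)
  have "b \<le> sum Q {x, y}" using pair[OF xy(3)] xy(3) by simp
  also have "\<dots> \<le> sum Q (A - {c})" by (rule sum_mono2) (use fin xy in auto)
  finally show ?thesis .
qed

lemma sum_Diff_pair_ge:
  fixes Q :: "'c \<Rightarrow> nat"
  assumes "card A = 3" "c1 \<noteq> c2" "\<And>c. a \<le> Q c"
  shows "sum Q A + a \<le> sum Q (A - {c1}) + sum Q (A - {c2})"
proof -
  have fin: "finite A" using assms(1) by (intro card_ge_0_finite) simp
  have "A - {c1, c2} \<noteq> {}"
    using card_mono[of "{c1, c2}" A] assms(1,2) by (cases "A \<subseteq> {c1, c2}") auto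
  then obtain z where z: "z \<in> A - {c1, c2}" by blast
  have "Q z \<le> sum Q (A - {c1, c2})"
    using fin z by (intro member_le_sum) auto
  then have "a \<le> sum Q (A - {c1, c2})"
    using assms(3)[of z] by linarith
  moreover have "sum Q (A - {c1}) + sum Q (A - {c2}) = sum Q A + sum Q (A - {c1, c2})"
  proof -
    have "(A - {c1}) \<union> (A - {c2}) = A" "(A - {c1}) \<inter> (A - {c2}) = A - {c1, c2}"
      using assms(2) by auto
    then show ?thesis using sum.union_inter[of "A - {c1}" "A - {c2}" Q] fin by simp
  qed
  ultimately show ?thesis by simp
qed

lemma sum_sum_Diff_singleton_ge:
  fixes Q :: "'c \<Rightarrow> nat"
  assumes "finite A" "finite S"
  shows "(card S - 1) * sum Q A \<le> (\<Sum>c\<in>S. sum Q (A - {c}))"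
proof -
  have "(\<Sum>c\<in>S. sum Q (A - {c})) = (\<Sum>c\<in>S. \<Sum>d\<in>A. if d \<noteq> c then Q d else 0)"
    using assms(1) by (simp add: sum.If_cases Diff_eq Compl_eq)
  also have "\<dots> = (\<Sum>d\<in>A. \<Sum>c\<in>S. if c \<noteq> d then Q d else 0)"
    by (subst sum.swap) (simp add: eq_commute)
  also have "\<dots> = (\<Sum>d\<in>A. card (S - {d}) * Q d)"
    using assms(2) by (simp add: sum.If_cases Diff_eq Compl_eq)
  also have "\<dots> \<ge> (\<Sum>d\<in>A. (card S - 1) * Q d)"
    by (intro sum_mono mult_right_mono) (use diff_card_le_card_Diff[of "{_}" S] in auto)
  finally show ?thesis by (simp add: sum_distrib_left)
qed

lemma sum_card_Diff_pair_eq: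
  assumes "finite U" "finite V" "finite X"
  shows "(\<Sum>a\<in>U. \<Sum>b\<in>V. card (X - {a, b})) = (\<Sum>x\<in>X. card (U - {x}) * card (V - {x}))"
proof -
  have "(\<Sum>a\<in>U. \<Sum>b\<in>V. card (X - {a, b}))
      = (\<Sum>a\<in>U. \<Sum>b\<in>V. \<Sum>x\<in>X. if a \<notin> {x} \<and> b \<notin> {x} then 1 else 0)"
  proof (intro sum.cong refl)
    fix a b
    have "X - {a, b} = {x \<in> X. a \<notin> {x} \<and> b \<notin> {x}}" by auto
    then show "card (X - {a, b}) = (\<Sum>x\<in>X. if a \<notin> {x} \<and> b \<notin> {x} then 1 else 0)"
      using sum.inter_filter[OF assms(3), of "\<lambda>_. 1::nat"] by simp
  qed
  also have "\<dots> = (\<Sum>a\<in>U. \<Sum>x\<in>X. \<Sum>b\<in>V. if a \<notin> {x} \<and> b \<notin> {x} then 1 else 0)"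
    by (intro sum.cong refl sum.swap)
  also have "\<dots> = (\<Sum>x\<in>X. \<Sum>a\<in>U. \<Sum>b\<in>V. if a \<notin> {x} \<and> b \<notin> {x} then 1 else 0)"
    by (rule sum.swap)
  also have "\<dots> = (\<Sum>x\<in>X. card (U - {x}) * card (V - {x}))"
    using assms(1,2) by (simp only: sum_sum_if_both_notin mult_1_right)
  finally show ?thesis .
qed

lemma sum_card_Diff_pair_ge:
  assumes "card U = 3" "card V = 3" "card X = 3"
  shows "18 \<le> (\<Sum>a\<in>U. \<Sum>b\<in>V. card (X - {a, b})) + 2 * card (U \<inter> V)"
proof -
  have fin: "finite U" "finite V" "finite X"
    using assms by (simp_all add: card_ge_0_finite)
  have point: "6 \<le> card (U - {x}) * card (V - {x}) + (if x \<in> U \<inter> V then 2 else 0)" for x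
  proof -
    have "2 \<le> card (U - {x})" "2 \<le> card (V - {x})"
      by (rule two_le_card_Diff_singleton, fact)+
    moreover have "card (U - {x}) = 3" if "x \<notin> U"
      using that assms(1) by simp
    moreover have "card (V - {x}) = 3" if "x \<notin> V"
      using that assms(2) by simp
    ultimately show ?thesis
      using mult_mono[of 2 "card (U - {x})" 3 "card (V - {x})"]
        mult_mono[of 3 "card (U - {x})" 2 "card (V - {x})"]
        mult_mono[of 2 "card (U - {x})" 2 "card (V - {x})"]
      by (cases "x \<in> U"; cases "x \<in> V") auto
  qed
  have "18 \<le> (\<Sum>x\<in>X. card (U - {x}) * card (V - {x}) + (if x \<in> U \<inter> V then 2 else 0))"
    using sum_mono[of X "\<lambda>_. 6", OF point] assms(3) by simp
  also have "\<dots> = (\<Sum>a\<in>U. \<Sum>b\<in>V. card (X - {a, b})) + 2 * card (X \<inter> (U \<inter> V))"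
    using fin by (simp add: sum.distrib sum_card_Diff_pair_eq sum.If_cases Int_def)
  also have "\<dots> \<le> (\<Sum>a\<in>U. \<Sum>b\<in>V. card (X - {a, b})) + 2 * card (U \<inter> V)"
    using fin by (intro add_left_mono mult_left_mono card_mono) auto
  finally show ?thesis .
qed

lemma sum_card_Diff_pair_mult_ge:
  assumes U: "card U = 3" and V: "card V = 3" and X: "card X = 3" and Y: "card Y = 3"
    and "U \<noteq> V"
  shows "21 \<le> (\<Sum>a\<in>U. \<Sum>b\<in>V. card (X - {a, b}) * card (Y - {a, b}))"
proof -
  have fin: "finite U" "finite V"
    using U V by (simp_all add: card_ge_0_finite)
  have point: "card (X - {a, b}) + card (Y - {a, b}) + (if b = a then 1 else 0)
      \<le> card (X - {a, b}) * card (Y - {a, b}) + 1" for a b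
  proof (cases "b = a")
    case True
    have "2 \<le> card (X - {a})" "2 \<le> card (Y - {a})"
      using X Y by (simp_all add: two_le_card_Diff_singleton)
    then show ?thesis
      using True add_le_mult by simp
  next
    case False
    then show ?thesis
      using add_le_mult_plus_1 one_le_card_Diff_pair[OF X] one_le_card_Diff_pair[OF Y] by simp
  qed
  have diag: "(\<Sum>a\<in>U. \<Sum>b\<in>V. if b = a then 1 else 0) = card (U \<inter> V)"
    using fin by (simp add: sum.If_cases Int_def)
  have "card (U \<inter> V) \<noteq> 3"
    using fin U V assms(5) card_subset_eq[of U "U \<inter> V"] card_subset_eq[of V "U \<inter> V"] by auto
  moreover have "card (U \<inter> V) \<le> 3"
    using fin U card_mono[of U "U \<inter> V"] by simp
  ultimately have "card (U \<inter> V) \<le> 2" by simp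
  moreover have "(\<Sum>a\<in>U. \<Sum>b\<in>V. card (X - {a, b})) + (\<Sum>a\<in>U. \<Sum>b\<in>V. card (Y - {a, b})) + card (U \<inter> V)
      \<le> (\<Sum>a\<in>U. \<Sum>b\<in>V. card (X - {a, b}) * card (Y - {a, b})) + 9"
  proof -
    have "(\<Sum>a\<in>U. \<Sum>b\<in>V. card (X - {a, b}) + card (Y - {a, b}) + (if b = a then 1 else 0))
        \<le> (\<Sum>a\<in>U. \<Sum>b\<in>V. card (X - {a, b}) * card (Y - {a, b}) + 1)"
      by (intro sum_mono point)
    then show ?thesis
      using U V by (simp only: sum.distrib diag) simp
  qed
  ultimately show ?thesis
    using sum_card_Diff_pair_ge[OF U V X] sum_card_Diff_pair_ge[OF U V Y] by linarith
qed

definition path_colouring :: "(nat \<Rightarrow> 'v) \<Rightarrow> nat \<Rightarrow> 'c \<Rightarrow> 'c \<Rightarrow> ('v \<Rightarrow> 'c) \<Rightarrow> nat \<Rightarrow> 'c" where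
  "path_colouring w n \<alpha> \<beta> h j = (if j = 0 then \<alpha> else if j = n then \<beta> else h (w j))"

definition path_count :: "('v \<Rightarrow> 'c set) \<Rightarrow> (nat \<Rightarrow> 'v) \<Rightarrow> nat \<Rightarrow> 'c \<Rightarrow> 'c \<Rightarrow> nat" where
  "path_count L w n \<alpha> \<beta> = card {h \<in> PiE (w ` {0<..<n}) L.
     \<forall>j<n. path_colouring w n \<alpha> \<beta> h j \<noteq> path_colouring w n \<alpha> \<beta> h (Suc j)}"

lemma path_count_1: "path_count L w (Suc 0) \<alpha> \<beta> = (if \<alpha> \<noteq> \<beta> then 1 else 0)"
proof -
  have "{0<..<Suc 0} = {}" by auto
  then show ?thesis by (simp add: path_count_def path_colouring_def)
qed

lemma path_colouring_fun_upd:
  assumes "inj w" "n \<ge> 1" "j \<le> n"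
  shows "path_colouring w (Suc n) \<alpha> \<beta> (g(w n := d)) j = path_colouring w n \<alpha> d g j"
  using assms by (auto simp: path_colouring_def inj_eq)

lemma path_colouring_last: "n \<ge> 1 \<Longrightarrow> path_colouring w n \<alpha> \<beta> h n = \<beta>"
  by (simp add: path_colouring_def)

lemma path_count_Suc:
  assumes "inj w" "n \<ge> 1" "\<forall>j\<in>{0<..n}. finite (L (w j))"
  shows "path_count L w (Suc n) \<alpha> \<beta> = (\<Sum>d\<in>L (w n) - {\<beta>}. path_count L w n \<alpha> d)"
proof -
  have verts: "w ` {0<..<Suc n} = insert (w n) (w ` {0<..<n})"
    using assms(2) by (auto simp: image_iff less_Suc_eq)
  have "w n \<notin> w ` {0<..<n}"
    using assms(1) by (auto simp: inj_eq)
  then have "path_count L w (Suc n) \<alpha> \<beta> = (\<Sum>d\<in>L (w n). card {g \<in> PiE (w ` {0<..<n}) L.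
      \<forall>j<Suc n. path_colouring w (Suc n) \<alpha> \<beta> (g(w n := d)) j
        \<noteq> path_colouring w (Suc n) \<alpha> \<beta> (g(w n := d)) (Suc j)})"
    unfolding path_count_def verts
    by (rule card_PiE_insert_filter) (use assms(2,3) in auto)
  also have "\<dots> = (\<Sum>d\<in>L (w n). if d \<noteq> \<beta> then path_count L w n \<alpha> d else 0)"
  proof (rule sum.cong[OF refl])
    fix d
    have "(\<forall>j<Suc n. path_colouring w (Suc n) \<alpha> \<beta> (g(w n := d)) j
        \<noteq> path_colouring w (Suc n) \<alpha> \<beta> (g(w n := d)) (Suc j)) \<longleftrightarrow>
      (\<forall>j<n. path_colouring w n \<alpha> d g j \<noteq> path_colouring w n \<alpha> d g (Suc j)) \<and> d \<noteq> \<beta>" for g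
      using assms(1,2) by (auto simp: less_Suc_eq path_colouring_fun_upd path_colouring_last)
    then show "card {g \<in> PiE (w ` {0<..<n}) L.
      \<forall>j<Suc n. path_colouring w (Suc n) \<alpha> \<beta> (g(w n := d)) j
        \<noteq> path_colouring w (Suc n) \<alpha> \<beta> (g(w n := d)) (Suc j)}
      = (if d \<noteq> \<beta> then path_count L w n \<alpha> d else 0)"
      unfolding path_count_def by simp
  qed
  also have "\<dots> = (\<Sum>d\<in>L (w n) - {\<beta>}. path_count L w n \<alpha> d)"
    using assms(2,3) by (simp add: sum.If_cases Diff_eq Compl_eq)
  finally show ?thesis .
qed

text \<open>path_min n = (2^n - 1) div 3 is the number of proper 3-colourings of a path with n edges
  whose ends are precoloured with equal colours if n is odd and distinct colours if n is even
  (see path_count_3_colours).\<close>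

fun path_min :: "nat \<Rightarrow> nat" where
  "path_min 0 = 0"
| "path_min (Suc n) = 2 * path_min n + (if odd n then 1 else 0)"

lemma path_min_Suc_Suc: "path_min (Suc (Suc n)) = path_min (Suc n) + 2 * path_min n + 1"
  by simp

lemma path_min_ge_5: "4 \<le> n \<Longrightarrow> 5 \<le> path_min n"
proof (induction n rule: nat_induct_at_least)
  case base
  show ?case by code_simp
qed simp

text \<open>The bound by path_min alone does not survive the recurrence path_count_Suc; together with
  the bounds on sums of two and of three values it does.\<close>

definition path_count_bounds :: "('c \<Rightarrow> nat) \<Rightarrow> nat \<Rightarrow> bool" where
  "path_count_bounds Q n \<longleftrightarrow>
     (\<forall>c. path_min n \<le> Q c) \<and>
     (\<forall>c1 c2. c1 \<noteq> c2 \<longrightarrow> path_min (Suc n) \<le> Q c1 + Q c2) \<and>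
     (\<forall>S. card S = 3 \<longrightarrow> path_min n + path_min (Suc n) + 1 \<le> sum Q S)"

lemma path_count_bounds_step:
  fixes Q :: "'c \<Rightarrow> nat"
  assumes bounds: "path_count_bounds Q n" and A: "card A = 3"
  shows "path_count_bounds (\<lambda>c. sum Q (A - {c})) (Suc n)"
proof -
  have fin: "finite A" using A by (intro card_ge_0_finite) simp
  have single: "path_min (Suc n) \<le> sum Q (A - {c})" for c
    using sum_Diff_singleton_ge_pair_bound[OF A] bounds by (simp add: path_count_bounds_def)
  have pair: "path_min (Suc (Suc n)) \<le> sum Q (A - {c1}) + sum Q (A - {c2})" if "c1 \<noteq> c2" for c1 c2
  proof -
    have "path_min (Suc (Suc n)) = (path_min n + path_min (Suc n) + 1) + path_min n"
      by simp
    also have "\<dots> \<le> sum Q A + path_min n"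
      using bounds A by (simp add: path_count_bounds_def)
    also have "\<dots> \<le> sum Q (A - {c1}) + sum Q (A - {c2})"
      using bounds by (intro sum_Diff_pair_ge[OF A that]) (simp add: path_count_bounds_def)
    finally show ?thesis .
  qed
  have triple: "path_min (Suc n) + path_min (Suc (Suc n)) + 1 \<le> (\<Sum>c\<in>S. sum Q (A - {c}))"
    if S: "card S = 3" for S :: "'c set"
  proof -
    have "path_min (Suc n) + path_min (Suc (Suc n)) + 1 = 2 * (path_min n + path_min (Suc n) + 1)"
      by (simp only: path_min_Suc_Suc) simp
    also have "\<dots> \<le> 2 * sum Q A"
      using bounds A unfolding path_count_bounds_def by (intro mult_left_mono) blast+
    also have "\<dots> \<le> (\<Sum>c\<in>S. sum Q (A - {c}))"
      using sum_sum_Diff_singleton_ge[OF fin, of S Q] S by (simp add: card_ge_0_finite)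
    finally show ?thesis .
  qed
  show ?thesis
    unfolding path_count_bounds_def using single pair triple by blast
qed

lemma path_count_bounds_1: "path_count_bounds (path_count L w (Suc 0) \<alpha>) (Suc 0)"
proof -
  have triple: "2 \<le> sum (path_count L w (Suc 0) \<alpha>) S" if "card S = 3" for S
  proof -
    have "{c. \<alpha> \<noteq> c} = - {\<alpha>}" by auto
    then have "sum (path_count L w (Suc 0) \<alpha>) S = card (S - {\<alpha>})"
      using that by (simp add: path_count_1 sum.If_cases Diff_eq card_ge_0_finite)
    then show ?thesis using two_le_card_Diff_singleton[OF that] by simp
  qed
  have pair: "1 \<le> path_count L w (Suc 0) \<alpha> c1 + path_count L w (Suc 0) \<alpha> c2"
    if "c1 \<noteq> c2" for c1 c2
    using that by (simp add: path_count_1)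
  have "path_min (Suc 0) = 0" "path_min (Suc (Suc 0)) = 1" by simp_all
  then show ?thesis
    unfolding path_count_bounds_def using pair triple by (simp add: numeral_2_eq_2)
qed

lemma path_count_bounds_path_count:
  assumes "inj w" "\<forall>j\<in>{0<..<n}. card (L (w j)) = 3" "1 \<le> n"
  shows "path_count_bounds (path_count L w n \<alpha>) n"
  using assms(3,2)
proof (induction n rule: nat_induct_at_least)
  case base
  show ?case using path_count_bounds_1 by (simp only: One_nat_def)
next
  case (Suc n)
  have cards: "\<forall>j\<in>{0<..n}. card (L (w j)) = 3"
    using Suc.prems by auto
  then have "\<forall>j\<in>{0<..n}. finite (L (w j))"
    by (intro ballI card_ge_0_finite) auto
  then have "path_count L w (Suc n) \<alpha> = (\<lambda>\<beta>. sum (path_count L w n \<alpha>) (L (w n) - {\<beta>}))"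
    by (simp add: fun_eq_iff path_count_Suc[OF assms(1) Suc.hyps(1)])
  moreover have "path_count_bounds (path_count L w n \<alpha>) n"
    using cards by (intro Suc.IH) auto
  moreover have "card (L (w n)) = 3"
    using cards Suc.hyps(1) by simp
  ultimately show ?case
    by (simp add: path_count_bounds_step)
qed

lemma path_min_le_path_count:
  assumes "inj w" "\<forall>j\<in>{0<..<n}. card (L (w j)) = 3" "1 \<le> n"
  shows "path_min n \<le> path_count L w n \<alpha> \<beta>"
  using path_count_bounds_path_count[OF assms] by (simp add: path_count_bounds_def)

lemma path_count_3_colours:
  assumes "inj w" "\<alpha> \<in> {1..3}" "\<beta> \<in> {1..3}" "1 \<le> n"
  shows "path_count (\<lambda>_. {1..3::nat}) w n \<alpha> \<beta> = path_min n + (if (\<beta> = \<alpha>) = even n then 1 else 0)"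
  using assms(4,3)
proof (induction n arbitrary: \<beta> rule: nat_induct_at_least)
  case base
  then show ?case by (simp add: path_count_1)
next
  case (Suc n)
  have colours: "{1..3::nat} = {1, 2, 3}" by auto
  have "path_count (\<lambda>_. {1..3::nat}) w (Suc n) \<alpha> \<beta>
      = (\<Sum>d\<in>{1..3} - {\<beta>}. path_count (\<lambda>_. {1..3::nat}) w n \<alpha> d)"
    by (rule path_count_Suc[OF assms(1) Suc.hyps]) simp
  also have "\<dots> = (\<Sum>d\<in>{1..3} - {\<beta>}. path_min n + (if (d = \<alpha>) = even n then 1 else 0))"
    using Suc.IH by (intro sum.cong) auto
  also have "\<dots> = path_min (Suc n) + (if (\<beta> = \<alpha>) = even (Suc n) then 1 else 0)"
    using assms(2) Suc.prems unfolding colours by (auto simp: insert_Diff_if)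
  finally show ?case .
qed

lemma inj_TI: "inj (TI i)"
  by (simp add: inj_def)

lemma theta_verts_2_2:
  "theta_verts 2 2 l = insert TU (insert TV (insert (TI 1 1) (insert (TI 2 1) (TI 3 ` {0<..<l}))))"
  unfolding theta_verts_def plen_def by (auto; force)

lemma theta_edges_2_2_proper_iff:
  "(\<forall>(x, y)\<in>theta_edges 2 2 l. F x \<noteq> F y) \<longleftrightarrow>
     F TU \<noteq> F (TI 1 1) \<and> F (TI 1 1) \<noteq> F TV \<and> F TU \<noteq> F (TI 2 1) \<and> F (TI 2 1) \<noteq> F TV \<and>
     (\<forall>j<l. F (tnode 2 2 l 3 j) \<noteq> F (tnode 2 2 l 3 (Suc j)))"
proof -
  have "(\<forall>(x, y)\<in>theta_edges 2 2 l. F x \<noteq> F y) \<longleftrightarrow>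
      (\<forall>i\<in>{1, 2, 3}. \<forall>j<plen 2 2 l i. F (tnode 2 2 l i j) \<noteq> F (tnode 2 2 l i (Suc j)))"
    unfolding theta_edges_def by auto
  then show ?thesis
    by (simp add: plen_def tnode_def less_2_cases_iff all_conj_distrib)
qed

lemma theta_2_2_colouring_path:
  "(h(TI 2 1 := y, TI 1 1 := x, TV := \<beta>, TU := \<alpha>)) (tnode 2 2 l 3 j) = path_colouring (TI 3) l \<alpha> \<beta> h j"
  by (simp add: tnode_def plen_def path_colouring_def)

lemma num_list_col_theta_2_2:
  assumes fin: "\<forall>v\<in>theta_verts 2 2 l. finite (L v)"
  shows "num_list_col (theta_verts 2 2 l) (theta_edges 2 2 l) L =
    (\<Sum>\<alpha>\<in>L TU. \<Sum>\<beta>\<in>L TV.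
       card (L (TI 1 1) - {\<alpha>, \<beta>}) * card (L (TI 2 1) - {\<alpha>, \<beta>}) * path_count L (TI 3) l \<alpha> \<beta>)"
proof -
  define P where "P f \<longleftrightarrow> (\<forall>(x, y)\<in>theta_edges 2 2 l. f x \<noteq> f y)" for f :: "tvert \<Rightarrow> nat"
  define W where "W = TI 3 ` {0<..<l}"
  have W: "finite W" "TU \<notin> W" "TV \<notin> W" "TI 1 1 \<notin> W" "TI 2 1 \<notin> W"
    by (auto simp: W_def)
  have fin': "\<forall>v\<in>insert TU (insert TV (insert (TI 1 1) (insert (TI 2 1) W))). finite (L v)"
    using fin by (simp add: theta_verts_2_2 W_def)
  have path: "card {h \<in> PiE W L. P (h(TI 2 1 := y, TI 1 1 := x, TV := \<beta>, TU := \<alpha>))}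
      = (if x \<notin> {\<alpha>, \<beta>} \<and> y \<notin> {\<alpha>, \<beta>} then path_count L (TI 3) l \<alpha> \<beta> else 0)" for x y \<alpha> \<beta>
  proof -
    have "P (h(TI 2 1 := y, TI 1 1 := x, TV := \<beta>, TU := \<alpha>)) \<longleftrightarrow> x \<notin> {\<alpha>, \<beta>} \<and> y \<notin> {\<alpha>, \<beta>} \<and>
        (\<forall>j<l. path_colouring (TI 3) l \<alpha> \<beta> h j \<noteq> path_colouring (TI 3) l \<alpha> \<beta> h (Suc j))" for h
      unfolding P_def theta_edges_2_2_proper_iff theta_2_2_colouring_path by auto
    then show ?thesis
      by (simp add: path_count_def W_def)
  qed
  have "num_list_col (theta_verts 2 2 l) (theta_edges 2 2 l) L
      = card {f \<in> PiE (insert TU (insert TV (insert (TI 1 1) (insert (TI 2 1) W)))) L. P f}"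
    by (simp add: num_list_col_def theta_verts_2_2 P_def W_def)
  also have "\<dots> = (\<Sum>\<alpha>\<in>L TU. \<Sum>\<beta>\<in>L TV. \<Sum>x\<in>L (TI 1 1). \<Sum>y\<in>L (TI 2 1).
      card {h \<in> PiE W L. P (h(TI 2 1 := y, TI 1 1 := x, TV := \<beta>, TU := \<alpha>))})"
    using W fin' by (simp add: card_PiE_insert_filter)
  also have "\<dots> = (\<Sum>\<alpha>\<in>L TU. \<Sum>\<beta>\<in>L TV.
       card (L (TI 1 1) - {\<alpha>, \<beta>}) * card (L (TI 2 1) - {\<alpha>, \<beta>}) * path_count L (TI 3) l \<alpha> \<beta>)"
    unfolding path by (intro sum.cong refl sum_sum_if_both_notin) (use fin' in auto)
  finally show ?thesis .
qed

lemma num_col_theta_2_2_3: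
  assumes "1 \<le> l"
  shows "num_col (theta_verts 2 2 l) (theta_edges 2 2 l) 3 = 18 * path_min l + (if even l then 12 else 6)"
proof -
  have colours: "{1..3::nat} = {1, 2, 3}" by auto
  have "num_col (theta_verts 2 2 l) (theta_edges 2 2 l) 3 = (\<Sum>\<alpha>\<in>{1..3}. \<Sum>\<beta>\<in>{1..3}.
      card ({1..3} - {\<alpha>, \<beta>}) * card ({1..3} - {\<alpha>, \<beta>}) * path_count (\<lambda>_. {1..3::nat}) (TI 3) l \<alpha> \<beta>)"
    unfolding num_col_def by (rule num_list_col_theta_2_2) simp
  also have "\<dots> = (\<Sum>\<alpha>\<in>{1..3}. \<Sum>\<beta>\<in>{1..3}. card ({1..3} - {\<alpha>, \<beta>}) * card ({1..3::nat} - {\<alpha>, \<beta>})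
      * (path_min l + (if (\<beta> = \<alpha>) = even l then 1 else 0)))"
    using path_count_3_colours[OF inj_TI _ _ assms] by (intro sum.cong refl) simp
  also have "\<dots> = 18 * path_min l + (if even l then 12 else 6)"
    unfolding colours by (simp add: insert_Diff_if)
  finally show ?thesis .
qed

theorem lemma21:
  fixes k :: nat and L :: "tvert \<Rightarrow> nat set"
  assumes "k \<ge> 2"
    and "\<forall>w \<in> theta_verts 2 2 (2*k). card (L w) = 3"
    and "L TU \<noteq> L TV"
  shows "num_list_col (theta_verts 2 2 (2*k)) (theta_edges 2 2 (2*k)) L
         \<ge> num_col (theta_verts 2 2 (2*k)) (theta_edges 2 2 (2*k)) 3"
proof -
  let ?pm = "path_min (2 * k)"
  let ?m = "\<lambda>\<alpha> \<beta>. card (L (TI 1 1) - {\<alpha>, \<beta>}) * card (L (TI 2 1) - {\<alpha>, \<beta>})"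
  have cards: "card (L TU) = 3" "card (L TV) = 3" "card (L (TI 1 1)) = 3" "card (L (TI 2 1)) = 3"
    "\<forall>j\<in>{0<..<2 * k}. card (L (TI 3 j)) = 3"
    using assms(2) by (simp_all add: theta_verts_2_2)
  have "num_col (theta_verts 2 2 (2*k)) (theta_edges 2 2 (2*k)) 3 = 18 * ?pm + 12"
    using assms(1) by (simp add: num_col_theta_2_2_3)
  also have "\<dots> \<le> 21 * ?pm"
    using path_min_ge_5[of "2 * k"] assms(1) by simp
  also have "\<dots> \<le> (\<Sum>\<alpha>\<in>L TU. \<Sum>\<beta>\<in>L TV. ?m \<alpha> \<beta>) * ?pm"
    using sum_card_Diff_pair_mult_ge[OF cards(1-4) assms(3)] by simp
  also have "\<dots> \<le> (\<Sum>\<alpha>\<in>L TU. \<Sum>\<beta>\<in>L TV. ?m \<alpha> \<beta> * path_count L (TI 3) (2 * k) \<alpha> \<beta>)"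
    unfolding sum_distrib_right
    using path_min_le_path_count[OF inj_TI cards(5)] assms(1)
    by (intro sum_mono mult_left_mono) auto
  also have "\<dots> = num_list_col (theta_verts 2 2 (2*k)) (theta_edges 2 2 (2*k)) L"
    using assms(2) by (intro num_list_col_theta_2_2[symmetric] ballI card_ge_0_finite, auto)
  finally show ?thesis .
qed

end
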